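(* Let $G$ be a two-player stage game and let $I=\{(i,j)\in A_1\times A_2: u_2(i,j)=\max_{j'\in A_2}u_2(i,j')\}$. Suppose that (1) $|V_1^{m,m}|>1$ and $|V_2^{m,m}|=1$; (2) there do not exist $\hat a_1\in A_1$, $\hat\sigma_2\in\Delta A_2$, $a_1'\in A_1$ with $u_1(\hat a_1,\hat\sigma_2)<u_1(a_1',\hat\sigma_2)$ and $\hat\sigma_2$ a best response to $\hat a_1$; (3) there do not exist $a_1\in A_1$ and $a_2,a_2'\in A_2$ with $a_2\ne a_2'$ such that both $a_2$ and $a_2'$ are best responses to $a_1$. Then: (a) $I\subseteq\mathrm{Nash}^{m,m}(G)$; (b) for each $i\in A_1$ there is a unique $j\in A_2$ with $(i,j)\in I$; (c) there exists $b\in\mathbb{R}$ such that $u_2(i,j)=b$ for all $(i,j)\in I$ and $u_2(i',j')<b$ for all $(i',j')\in(A_1\times A_2)\setminus I$; (d) there exist $(i,j),(i',j')\in I$ with $u_1(i,j)\ne u_1(i',j')$, $i\ne i'$ and $j\ne j'$.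
   Context: A two-player stage game $G$ consists of finite nonempty action sets $A_1,A_2$ and payoff functions $u_1,u_2:A_1\times A_2\to\mathbb{R}$, extended to mixed strategies $\sigma_i\in\Delta A_i$ by expectation. A (mixed) strategy is a best response to the opponent's strategy if it maximizes expected payoff against it. $\mathrm{Nash}^{m,m}(G)$ is the set of mixed-strategy Nash equilibria of $G$ (pure profiles viewed as degenerate mixed profiles), and $V_i^{m,m}=\{u_i(\sigma):\sigma\in\mathrm{Nash}^{m,m}(G)\}$. *)

theory Defs
  imports Complex_Main
begin

definition mixed :: "'a set \<Rightarrow> ('a \<Rightarrow> real) \<Rightarrow> bool" where
  "mixed A \<sigma> \<longleftrightarrow> (\<forall>a. 0 \<le> \<sigma> a) \<and> (\<forall>a. a \<notin> A \<longrightarrow> \<sigma> a = 0) \<and> (\<Sum>a\<in>A. \<sigma> a) = 1"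

definition pure :: "'a \<Rightarrow> 'a \<Rightarrow> real" where
  "pure a = (\<lambda>x. if x = a then 1 else 0)"

definition expu :: "'a set \<Rightarrow> 'b set \<Rightarrow> ('a \<Rightarrow> 'b \<Rightarrow> real) \<Rightarrow> ('a \<Rightarrow> real) \<Rightarrow> ('b \<Rightarrow> real) \<Rightarrow> real" where
  "expu A1 A2 u \<sigma>1 \<sigma>2 = (\<Sum>a1\<in>A1. \<Sum>a2\<in>A2. \<sigma>1 a1 * \<sigma>2 a2 * u a1 a2)"

definition best_resp1 where
  "best_resp1 A1 A2 u1 \<sigma>1 \<sigma>2 \<longleftrightarrow> mixed A1 \<sigma>1 \<and>
     (\<forall>\<tau>. mixed A1 \<tau> \<longrightarrow> expu A1 A2 u1 \<tau> \<sigma>2 \<le> expu A1 A2 u1 \<sigma>1 \<sigma>2)"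

definition best_resp2 where
  "best_resp2 A1 A2 u2 \<sigma>1 \<sigma>2 \<longleftrightarrow> mixed A2 \<sigma>2 \<and>
     (\<forall>\<tau>. mixed A2 \<tau> \<longrightarrow> expu A1 A2 u2 \<sigma>1 \<tau> \<le> expu A1 A2 u2 \<sigma>1 \<sigma>2)"

definition nash_mm where
  "nash_mm A1 A2 u1 u2 = {(\<sigma>1, \<sigma>2). mixed A1 \<sigma>1 \<and> mixed A2 \<sigma>2 \<and>
      best_resp1 A1 A2 u1 \<sigma>1 \<sigma>2 \<and> best_resp2 A1 A2 u2 \<sigma>1 \<sigma>2}"

definition V1_mm where
  "V1_mm A1 A2 u1 u2 = (\<lambda>(\<sigma>1, \<sigma>2). expu A1 A2 u1 \<sigma>1 \<sigma>2) ` nash_mm A1 A2 u1 u2"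

definition V2_mm where
  "V2_mm A1 A2 u1 u2 = (\<lambda>(\<sigma>1, \<sigma>2). expu A1 A2 u2 \<sigma>1 \<sigma>2) ` nash_mm A1 A2 u1 u2"

definition Iset where
  "Iset A1 A2 u2 = {(i, j). i \<in> A1 \<and> j \<in> A2 \<and> u2 i j = (MAX j'\<in>A2. u2 i j')}"

end

theory Submission
  imports Defs
begin

text \<open>Condition (2) makes every profile of \<open>I\<close> a pure equilibrium and condition (3) makes \<open>I\<close>
the graph of a function. As \<open>V2\<close> is a singleton \<open>{v}\<close>, player 2's best-response value is \<open>v\<close>
in every row, so \<open>u2 \<le> v\<close> with equality exactly on \<open>I\<close>. Hence any equilibrium puts all its
weight on \<open>I\<close>; being a rectangle inside a graph, its support lies in a single column \<open>j\<close>, and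
all rows there are best replies to \<open>j\<close>, so they give player 1 the same payoff. Thus every
equilibrium payoff of player 1 is a value of \<open>u1\<close> on \<open>I\<close>, and two distinct ones come from two
profiles of \<open>I\<close> differing in both coordinates.\<close>

lemma mixed_pure: "finite A \<Longrightarrow> a \<in> A \<Longrightarrow> mixed A (pure a)"
  unfolding mixed_def pure_def by auto

lemma sum_pure_mult:
  assumes "finite A" "a \<in> A"
  shows "(\<Sum>x\<in>A. pure a x * f x) = f a"
proof -
  have "(\<Sum>x\<in>A. pure a x * f x) = (\<Sum>x\<in>A. if x = a then f x else 0)"
    by (rule sum.cong) (auto simp: pure_def)
  also have "\<dots> = f a"
    using assms by simp
  finally show ?thesis .
qed

lemma mixed_sum_mult_le:
  assumes "mixed A \<sigma>" "\<And>a. a \<in> A \<Longrightarrow> f a \<le> M"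
  shows "(\<Sum>a\<in>A. \<sigma> a * f a) \<le> M"
proof -
  have "(\<Sum>a\<in>A. \<sigma> a * f a) \<le> (\<Sum>a\<in>A. \<sigma> a * M)"
    using assms by (intro sum_mono) (simp add: mixed_def mult_left_mono)
  also have "\<dots> = M"
    using assms(1) by (simp add: mixed_def flip: sum_distrib_right)
  finally show ?thesis .
qed

lemma mixed_ex_pos:
  assumes "mixed A \<sigma>"
  obtains a where "a \<in> A" "0 < \<sigma> a"
proof -
  from assms have "(\<Sum>a\<in>A. \<sigma> a) \<noteq> 0"
    by (simp add: mixed_def)
  then obtain a where "a \<in> A" "\<sigma> a \<noteq> 0"
    by (meson sum.neutral)
  with assms that show ?thesis
    by (auto simp: mixed_def less_le)
qed

lemma expu_pure_left:
  assumes "finite A1" "i \<in> A1"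
  shows "expu A1 A2 u (pure i) \<sigma> = (\<Sum>a2\<in>A2. \<sigma> a2 * u i a2)"
proof -
  have "expu A1 A2 u (pure i) \<sigma> = (\<Sum>a1\<in>A1. pure i a1 * (\<Sum>a2\<in>A2. \<sigma> a2 * u a1 a2))"
    unfolding expu_def by (simp add: sum_distrib_left mult.assoc)
  with sum_pure_mult[OF assms] show ?thesis
    by simp
qed

lemma expu_pure_right:
  assumes "finite A2" "j \<in> A2"
  shows "expu A1 A2 u \<sigma> (pure j) = (\<Sum>a1\<in>A1. \<sigma> a1 * u a1 j)"
proof -
  have "expu A1 A2 u \<sigma> (pure j) = (\<Sum>a1\<in>A1. \<Sum>a2\<in>A2. pure j a2 * (\<sigma> a1 * u a1 a2))"
    unfolding expu_def by (simp add: mult.assoc mult.left_commute)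
  with sum_pure_mult[OF assms] show ?thesis
    by simp
qed

lemma expu_pure_pure:
  assumes "finite A1" "i \<in> A1" "finite A2" "j \<in> A2"
  shows "expu A1 A2 u (pure i) (pure j) = u i j"
  using assms by (simp add: expu_pure_left sum_pure_mult)

lemma expu_diff:
  "expu A1 A2 (\<lambda>a1 a2. f a1 a2 - g a1 a2) \<sigma>1 \<sigma>2 = expu A1 A2 f \<sigma>1 \<sigma>2 - expu A1 A2 g \<sigma>1 \<sigma>2"
  unfolding expu_def by (simp add: right_diff_distrib sum_subtractf)

lemma expu_const:
  assumes "mixed A1 \<sigma>1" "mixed A2 \<sigma>2"
  shows "expu A1 A2 (\<lambda>_ _. c) \<sigma>1 \<sigma>2 = c"
proof -
  have "expu A1 A2 (\<lambda>_ _. c) \<sigma>1 \<sigma>2 = (\<Sum>a1\<in>A1. \<sigma>1 a1 * c * (\<Sum>a2\<in>A2. \<sigma>2 a2))"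
    unfolding expu_def by (simp add: sum_distrib_left mult_ac)
  also have "\<dots> = c"
    using assms by (simp add: mixed_def flip: sum_distrib_right)
  finally show ?thesis .
qed

lemma expu_cong_support:
  assumes "mixed A1 \<sigma>1" "mixed A2 \<sigma>2"
    and "\<And>a1 a2. \<lbrakk>a1 \<in> A1; a2 \<in> A2; 0 < \<sigma>1 a1; 0 < \<sigma>2 a2\<rbrakk> \<Longrightarrow> u a1 a2 = u' a1 a2"
  shows "expu A1 A2 u \<sigma>1 \<sigma>2 = expu A1 A2 u' \<sigma>1 \<sigma>2"
  unfolding expu_def
proof (intro sum.cong refl)
  fix a1 a2 assume "a1 \<in> A1" "a2 \<in> A2"
  moreover have "0 \<le> \<sigma>1 a1" "0 \<le> \<sigma>2 a2"
    using assms(1,2) by (auto simp: mixed_def)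
  ultimately show "\<sigma>1 a1 * \<sigma>2 a2 * u a1 a2 = \<sigma>1 a1 * \<sigma>2 a2 * u' a1 a2"
    using assms(3) by (cases "0 < \<sigma>1 a1 \<and> 0 < \<sigma>2 a2") auto
qed

lemma expu_eq_bound_on_support:
  assumes "finite A1" "finite A2" "mixed A1 \<sigma>1" "mixed A2 \<sigma>2"
    and le: "\<And>x y. \<lbrakk>x \<in> A1; y \<in> A2\<rbrakk> \<Longrightarrow> u x y \<le> v"
    and eq: "expu A1 A2 u \<sigma>1 \<sigma>2 = v"
    and "a \<in> A1" "b \<in> A2" "0 < \<sigma>1 a" "0 < \<sigma>2 b"
  shows "u a b = v"
proof -
  have nonneg: "0 \<le> \<sigma>1 b1 * \<sigma>2 b2 * (v - u b1 b2)" if "b1 \<in> A1" "b2 \<in> A2" for b1 b2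
    using assms(3,4) le[OF that] by (simp add: mixed_def)
  have "expu A1 A2 (\<lambda>b1 b2. v - u b1 b2) \<sigma>1 \<sigma>2 = 0"
    using assms(3,4) eq by (simp add: expu_diff expu_const)
  then have "\<forall>b1\<in>A1. \<forall>b2\<in>A2. \<sigma>1 b1 * \<sigma>2 b2 * (v - u b1 b2) = 0"
    using assms(1,2) nonneg by (simp add: expu_def sum_nonneg sum_nonneg_eq_0_iff)
  with assms(7-10) show ?thesis
    by fastforce
qed

lemma best_resp2_pure_pureI:
  assumes "finite A1" "finite A2" "i \<in> A1" "j \<in> A2" "\<And>j'. j' \<in> A2 \<Longrightarrow> u2 i j' \<le> u2 i j"
  shows "best_resp2 A1 A2 u2 (pure i) (pure j)"
  unfolding best_resp2_def
proof (intro conjI allI impI)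
  show "mixed A2 (pure j)"
    using assms by (simp add: mixed_pure)
  fix \<tau> assume "mixed A2 \<tau>"
  then have "(\<Sum>a2\<in>A2. \<tau> a2 * u2 i a2) \<le> u2 i j"
    using assms(5) by (rule mixed_sum_mult_le)
  with assms(1-4) show "expu A1 A2 u2 (pure i) \<tau> \<le> expu A1 A2 u2 (pure i) (pure j)"
    by (simp add: expu_pure_left sum_pure_mult)
qed

lemma best_resp1_pure_pureI:
  assumes "finite A1" "finite A2" "i \<in> A1" "j \<in> A2" "\<And>i'. i' \<in> A1 \<Longrightarrow> u1 i' j \<le> u1 i j"
  shows "best_resp1 A1 A2 u1 (pure i) (pure j)"
  unfolding best_resp1_def
proof (intro conjI allI impI)
  show "mixed A1 (pure i)"
    using assms by (simp add: mixed_pure)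
  fix \<tau> assume "mixed A1 \<tau>"
  then have "(\<Sum>a1\<in>A1. \<tau> a1 * u1 a1 j) \<le> u1 i j"
    using assms(5) by (rule mixed_sum_mult_le)
  with assms(1-4) show "expu A1 A2 u1 \<tau> (pure j) \<le> expu A1 A2 u1 (pure i) (pure j)"
    by (simp add: expu_pure_right sum_pure_mult)
qed

lemma nash_pure_u1_le:
  assumes "finite A1" "finite A2" "i \<in> A1" "j \<in> A2" "i' \<in> A1"
    and "(pure i, pure j) \<in> nash_mm A1 A2 u1 u2"
  shows "u1 i' j \<le> u1 i j"
proof -
  have "expu A1 A2 u1 (pure i') (pure j) \<le> expu A1 A2 u1 (pure i) (pure j)"
    using assms by (simp add: nash_mm_def best_resp1_def mixed_pure)
  with assms(1-5) show ?thesis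
    by (simp add: expu_pure_pure)
qed

locale finite_game =
  fixes A1 :: "'a set" and A2 :: "'b set" and u1 u2 :: "'a \<Rightarrow> 'b \<Rightarrow> real"
  assumes finite_A1: "finite A1" and finite_A2: "finite A2" and A2_nonempty: "A2 \<noteq> {}"
begin

lemma Iset_iff:
  "(i, j) \<in> Iset A1 A2 u2 \<longleftrightarrow> i \<in> A1 \<and> j \<in> A2 \<and> (\<forall>j'\<in>A2. u2 i j' \<le> u2 i j)"
  using finite_A2 by (auto simp: Iset_def intro!: antisym Max_ge Max.boundedI)

lemma Iset_ex:
  assumes "i \<in> A1"
  obtains j where "(i, j) \<in> Iset A1 A2 u2"
proof -
  have "(MAX j'\<in>A2. u2 i j') \<in> (\<lambda>j'. u2 i j') ` A2"
    using finite_A2 A2_nonempty by (intro Max_in) auto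
  then obtain j where "j \<in> A2" "u2 i j = (MAX j'\<in>A2. u2 i j')"
    by (metis imageE)
  with assms that show ?thesis
    by (auto simp: Iset_def)
qed

lemma best_resp2_Iset:
  "(i, j) \<in> Iset A1 A2 u2 \<Longrightarrow> best_resp2 A1 A2 u2 (pure i) (pure j)"
  using finite_A1 finite_A2 by (simp add: Iset_iff best_resp2_pure_pureI)

lemma Iset_unique:
  assumes "\<And>i j j'. \<lbrakk>i \<in> A1; j \<in> A2; j' \<in> A2;
      best_resp2 A1 A2 u2 (pure i) (pure j); best_resp2 A1 A2 u2 (pure i) (pure j')\<rbrakk> \<Longrightarrow> j = j'"
    and "(i, j) \<in> Iset A1 A2 u2" "(i, j') \<in> Iset A1 A2 u2"
  shows "j = j'"
  using assms by (meson Iset_iff best_resp2_Iset)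

lemma Iset_graph:
  assumes "\<And>i j j'. \<lbrakk>(i, j) \<in> Iset A1 A2 u2; (i, j') \<in> Iset A1 A2 u2\<rbrakk> \<Longrightarrow> j = j'"
  shows "\<forall>i \<in> A1. \<exists>!j. j \<in> A2 \<and> (i, j) \<in> Iset A1 A2 u2"
  using assms Iset_ex Iset_iff by metis

lemma pure_nash_IsetI:
  assumes no_deviation: "\<And>i i' \<sigma>. \<lbrakk>i \<in> A1; i' \<in> A1; best_resp2 A1 A2 u2 (pure i) \<sigma>\<rbrakk>
      \<Longrightarrow> expu A1 A2 u1 (pure i') \<sigma> \<le> expu A1 A2 u1 (pure i) \<sigma>"
    and ij: "(i, j) \<in> Iset A1 A2 u2"
  shows "(pure i, pure j) \<in> nash_mm A1 A2 u1 u2"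
proof -
  have i: "i \<in> A1" and j: "j \<in> A2"
    using ij by (auto simp: Iset_iff)
  have "u1 i' j \<le> u1 i j" if "i' \<in> A1" for i'
    using no_deviation[OF i that best_resp2_Iset[OF ij]] finite_A1 finite_A2 i j that
    by (simp add: expu_pure_pure)
  then have "best_resp1 A1 A2 u1 (pure i) (pure j)"
    by (rule best_resp1_pure_pureI[OF finite_A1 finite_A2 i j])
  with best_resp2_Iset[OF ij] show ?thesis
    using finite_A1 finite_A2 i j by (simp add: nash_mm_def mixed_pure)
qed

end

locale unique_payoff2_game = finite_game +
  fixes v :: real
  assumes V2_eq: "V2_mm A1 A2 u1 u2 = {v}"
    and pure_nash_Iset: "\<And>i j. (i, j) \<in> Iset A1 A2 u2 \<Longrightarrow> (pure i, pure j) \<in> nash_mm A1 A2 u1 u2"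
begin

lemma Iset_u2_eq_v: "(i, j) \<in> Iset A1 A2 u2 \<Longrightarrow> u2 i j = v"
proof -
  assume ij: "(i, j) \<in> Iset A1 A2 u2"
  then have "expu A1 A2 u2 (pure i) (pure j) \<in> V2_mm A1 A2 u1 u2"
    unfolding V2_mm_def using pure_nash_Iset by force
  with ij V2_eq finite_A1 finite_A2 show ?thesis
    by (auto simp: Iset_iff expu_pure_pure)
qed

lemma u2_le_v: "\<lbrakk>i \<in> A1; j \<in> A2\<rbrakk> \<Longrightarrow> u2 i j \<le> v"
  by (metis Iset_ex Iset_iff Iset_u2_eq_v)

lemma Iset_iff_u2_eq_v: "(i, j) \<in> Iset A1 A2 u2 \<longleftrightarrow> i \<in> A1 \<and> j \<in> A2 \<and> u2 i j = v"
  using Iset_iff Iset_u2_eq_v u2_le_v by metis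

lemma Iset_column_u1_eq:
  assumes "(i, j) \<in> Iset A1 A2 u2" "(i', j) \<in> Iset A1 A2 u2"
  shows "u1 i j = u1 i' j"
proof -
  have "i \<in> A1" "i' \<in> A1" "j \<in> A2"
    using assms by (auto simp: Iset_iff)
  with finite_A1 finite_A2 show ?thesis
    using nash_pure_u1_le[OF _ _ _ _ _ pure_nash_Iset[OF assms(1)]]
      nash_pure_u1_le[OF _ _ _ _ _ pure_nash_Iset[OF assms(2)]]
    by (meson antisym)
qed

lemma nash_support_Iset:
  assumes "(\<sigma>1, \<sigma>2) \<in> nash_mm A1 A2 u1 u2"
    and "a1 \<in> A1" "a2 \<in> A2" "0 < \<sigma>1 a1" "0 < \<sigma>2 a2"
  shows "(a1, a2) \<in> Iset A1 A2 u2"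
proof -
  have m1: "mixed A1 \<sigma>1" and m2: "mixed A2 \<sigma>2"
    using assms(1) by (auto simp: nash_mm_def)
  have "expu A1 A2 u2 \<sigma>1 \<sigma>2 = v"
    using assms(1) V2_eq unfolding V2_mm_def by force
  then have "u2 a1 a2 = v"
    using expu_eq_bound_on_support[OF finite_A1 finite_A2 m1 m2, of u2 v] u2_le_v assms(2-5) by blast
  with assms(2,3) show ?thesis
    by (simp add: Iset_iff_u2_eq_v)
qed

lemma V1_subset_Iset_values:
  assumes unique: "\<And>i j j'. \<lbrakk>(i, j) \<in> Iset A1 A2 u2; (i, j') \<in> Iset A1 A2 u2\<rbrakk> \<Longrightarrow> j = j'"
    and "x \<in> V1_mm A1 A2 u1 u2"
  obtains i j where "(i, j) \<in> Iset A1 A2 u2" "x = u1 i j"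
proof -
  obtain \<sigma>1 \<sigma>2 where nash: "(\<sigma>1, \<sigma>2) \<in> nash_mm A1 A2 u1 u2"
    and x: "x = expu A1 A2 u1 \<sigma>1 \<sigma>2"
    using assms(2) unfolding V1_mm_def by auto
  have m1: "mixed A1 \<sigma>1" and m2: "mixed A2 \<sigma>2"
    using nash by (auto simp: nash_mm_def)
  obtain i where i: "i \<in> A1" "0 < \<sigma>1 i"
    using m1 by (rule mixed_ex_pos)
  obtain j where j: "j \<in> A2" "0 < \<sigma>2 j"
    using m2 by (rule mixed_ex_pos)
  have ij: "(i, j) \<in> Iset A1 A2 u2"
    using nash_support_Iset[OF nash i(1) j(1) i(2) j(2)] .
  have "u1 a1 a2 = u1 i j"
    if "a1 \<in> A1" "a2 \<in> A2" "0 < \<sigma>1 a1" "0 < \<sigma>2 a2" for a1 a2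
  proof -
    have "a2 = j"
      using unique[OF nash_support_Iset[OF nash i(1) that(2) i(2) that(4)] ij] .
    moreover have "(a1, j) \<in> Iset A1 A2 u2"
      using nash_support_Iset[OF nash that(1) j(1) that(3) j(2)] .
    ultimately show ?thesis
      using Iset_column_u1_eq[OF ij] by metis
  qed
  then have "x = expu A1 A2 (\<lambda>_ _. u1 i j) \<sigma>1 \<sigma>2"
    unfolding x by (rule expu_cong_support[OF m1 m2])
  with m1 m2 ij that show ?thesis
    by (simp add: expu_const)
qed

lemma u2_less_v_off_Iset: "\<lbrakk>i \<in> A1; j \<in> A2; (i, j) \<notin> Iset A1 A2 u2\<rbrakk> \<Longrightarrow> u2 i j < v"
  using u2_le_v Iset_iff_u2_eq_v by (simp add: less_le)

lemma V1_distinct_values_Iset: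
  assumes unique: "\<And>i j j'. \<lbrakk>(i, j) \<in> Iset A1 A2 u2; (i, j') \<in> Iset A1 A2 u2\<rbrakk> \<Longrightarrow> j = j'"
    and "\<exists>x\<in>V1_mm A1 A2 u1 u2. \<exists>y\<in>V1_mm A1 A2 u1 u2. x \<noteq> y"
  shows "\<exists>(i, j) \<in> Iset A1 A2 u2. \<exists>(i', j') \<in> Iset A1 A2 u2. u1 i j \<noteq> u1 i' j' \<and> i \<noteq> i' \<and> j \<noteq> j'"
proof -
  obtain x y where x: "x \<in> V1_mm A1 A2 u1 u2" and y: "y \<in> V1_mm A1 A2 u1 u2" and "x \<noteq> y"
    using assms(2) by blast
  obtain i j where ij: "(i, j) \<in> Iset A1 A2 u2" "x = u1 i j"
    using V1_subset_Iset_values[OF _ x] unique by blast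
  obtain i' j' where ij': "(i', j') \<in> Iset A1 A2 u2" "y = u1 i' j'"
    using V1_subset_Iset_values[OF _ y] unique by blast
  have ne: "u1 i j \<noteq> u1 i' j'"
    using \<open>x \<noteq> y\<close> ij ij' by simp
  moreover have "i \<noteq> i'"
    using unique ij(1) ij'(1) ne by blast
  moreover have "j \<noteq> j'"
    using Iset_column_u1_eq ij(1) ij'(1) ne by blast
  ultimately show ?thesis
    using ij(1) ij'(1) by blast
qed

end

theorem mainTheorem3:
  fixes A1 :: "'a set" and A2 :: "'b set" and u1 u2 :: "'a \<Rightarrow> 'b \<Rightarrow> real"
  assumes fin1: "finite A1" and ne1: "A1 \<noteq> {}"
    and fin2: "finite A2" and ne2: "A2 \<noteq> {}"
    and h1: "\<exists>x\<in>V1_mm A1 A2 u1 u2. \<exists>y\<in>V1_mm A1 A2 u1 u2. x \<noteq> y"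
    and h1': "\<exists>v. V2_mm A1 A2 u1 u2 = {v}"
    and h2: "\<not> (\<exists>a1h \<in> A1. \<exists>\<sigma>2h. \<exists>a1' \<in> A1.
               expu A1 A2 u1 (pure a1h) \<sigma>2h < expu A1 A2 u1 (pure a1') \<sigma>2h
             \<and> best_resp2 A1 A2 u2 (pure a1h) \<sigma>2h)"
    and h3: "\<not> (\<exists>a1 \<in> A1. \<exists>a2 \<in> A2. \<exists>a2' \<in> A2. a2 \<noteq> a2'
             \<and> best_resp2 A1 A2 u2 (pure a1) (pure a2)
             \<and> best_resp2 A1 A2 u2 (pure a1) (pure a2'))"
  shows "(\<forall>(i, j) \<in> Iset A1 A2 u2. (pure i, pure j) \<in> nash_mm A1 A2 u1 u2)
    \<and> (\<forall>i \<in> A1. \<exists>!j. j \<in> A2 \<and> (i, j) \<in> Iset A1 A2 u2)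
    \<and> (\<exists>b::real. (\<forall>(i, j) \<in> Iset A1 A2 u2. u2 i j = b)
         \<and> (\<forall>(i', j') \<in> (A1 \<times> A2) - Iset A1 A2 u2. u2 i' j' < b))
    \<and> (\<exists>(i, j) \<in> Iset A1 A2 u2. \<exists>(i', j') \<in> Iset A1 A2 u2.
         u1 i j \<noteq> u1 i' j' \<and> i \<noteq> i' \<and> j \<noteq> j')"
proof -
  interpret finite_game A1 A2 u1 u2
    using fin1 fin2 ne2 by unfold_locales
  have nash: "(pure i, pure j) \<in> nash_mm A1 A2 u1 u2" if "(i, j) \<in> Iset A1 A2 u2" for i j
    by (rule pure_nash_IsetI[OF _ that]) (use h2 in \<open>auto simp: not_less\<close>)
  have unique: "j = j'" if "(i, j) \<in> Iset A1 A2 u2" "(i, j') \<in> Iset A1 A2 u2" for i j j'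
    by (rule Iset_unique[OF _ that]) (use h3 in blast)
  obtain v where v: "V2_mm A1 A2 u1 u2 = {v}"
    using h1' by blast
  interpret unique_payoff2_game A1 A2 u1 u2 v
    by unfold_locales (simp_all add: v nash)
  have "\<forall>(i, j) \<in> Iset A1 A2 u2. u2 i j = v" "\<forall>(i, j) \<in> (A1 \<times> A2) - Iset A1 A2 u2. u2 i j < v"
    using Iset_iff_u2_eq_v u2_less_v_off_Iset by auto
  moreover have "\<forall>i \<in> A1. \<exists>!j. j \<in> A2 \<and> (i, j) \<in> Iset A1 A2 u2"
    by (rule Iset_graph) (fact unique)
  moreover have "\<exists>(i, j) \<in> Iset A1 A2 u2. \<exists>(i', j') \<in> Iset A1 A2 u2.
      u1 i j \<noteq> u1 i' j' \<and> i \<noteq> i' \<and> j \<noteq> j'"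
    by (rule V1_distinct_values_Iset) (fact unique, fact h1)
  ultimately show ?thesis
    using nash by blast
qed

end
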